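(* Let $X,Y$ be finite sets and consider $\ell^\infty(X)\subseteq B(\ell^2(X))$, $\ell^\infty(Y)\subseteq B(\ell^2(Y))$ acting diagonally. For a multi-relation $R\subseteq X\times X\times Y$ put $V_R=\mathrm{span}\{e_{x_1x_2}\otimes e_{yy}:(x_1,x_2,y)\in R\}\subseteq B(\ell^2(X))\otimes\ell^\infty(Y)$, and for a quantum multi-relation $V$ on $(\ell^\infty(X),\ell^\infty(Y))$ put $R_V=\{(x_1,x_2,y):\exists\,T\in V\text{ with }\langle e_{x_1}\otimes e_y,T(e_{x_2}\otimes e_y)\rangle\ne0\}$. Then $V_R$ is a quantum multi-relation, $R_V$ is a multi-relation, and the assignments $R\mapsto V_R$ and $V\mapsto R_V$ are mutually inverse bijections between multi-relations on $(X,Y)$ and quantum multi-relations on $(\ell^\infty(X),\ell^\infty(Y))$.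
   Context: $\{e_x\}$ is the standard basis of $\ell^2(X)$ and $e_{x_1x_2}$ the matrix units. A multi-relation on a pair of finite sets $(X,Y)$ is a subset $R\subseteq X\times X\times Y$. For finite-dimensional von Neumann algebras $M\subseteq B(H)$, $N\subseteq B(K)$, a quantum multi-relation (multigraph) on $(M,N)$ is a linear subspace $V\subseteq B(H\otimes K)$ such that (1) $V\subseteq B(H)\otimes N$; (2) $V$ is an $(M'\otimes1)$–$(M'\otimes1)$ bimodule, where $M'$ is the commutant of $M$ in $B(H)$; (3) $(1\otimes Z(N))V\subseteq V$, where $Z(N)=N\cap N'$ is the center of $N$. *)

theory Defs
  imports Main "HOL-Library.Complex_Order" Complex_Main
begin

text \<open>Operators on the finite-dimensional Hilbert space l2('a) are represented by their
matrices w.r.t. the standard basis: A i j = <e_i, A e_j>.  Operators on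
l2(X) (x) l2(Y) = l2(X x Y) are matrices indexed by X x Y.\<close>

type_synonym 'a mat = "'a \<Rightarrow> 'a \<Rightarrow> complex"

definition mmul :: "('a::finite) mat \<Rightarrow> 'a mat \<Rightarrow> 'a mat" where
  "mmul A B = (\<lambda>i j. \<Sum>k\<in>UNIV. A i k * B k j)"

definition idm :: "'a mat" where
  "idm = (\<lambda>i j. if i = j then 1 else 0)"

definition munit :: "'a \<Rightarrow> 'a \<Rightarrow> 'a mat" where
  "munit a b = (\<lambda>i j. if i = a \<and> j = b then 1 else 0)"

definition tens :: "'x mat \<Rightarrow> 'y mat \<Rightarrow> ('x \<times> 'y) mat" where
  "tens A B = (\<lambda>(x1, y1) (x2, y2). A x1 x2 * B y1 y2)"

definition mspan :: "'a mat set \<Rightarrow> 'a mat set" where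
  "mspan S = {T. \<exists>(n::nat) (c::nat \<Rightarrow> complex) f.
      (\<forall>k<n. f k \<in> S) \<and> T = (\<lambda>i j. \<Sum>k<n. c k * f k i j)}"

definition msubspace :: "'a mat set \<Rightarrow> bool" where
  "msubspace V \<longleftrightarrow> (\<lambda>i j. 0) \<in> V \<and>
     (\<forall>S\<in>V. \<forall>T\<in>V. (\<lambda>i j. S i j + T i j) \<in> V) \<and>
     (\<forall>c::complex. \<forall>T\<in>V. (\<lambda>i j. c * T i j) \<in> V)"

definition commutant :: "('a::finite) mat set \<Rightarrow> 'a mat set" where
  "commutant M = {A. \<forall>B\<in>M. mmul A B = mmul B A}"

definition center :: "('a::finite) mat set \<Rightarrow> 'a mat set" where
  "center N = N \<inter> commutant N"

definition tensor_sp :: "'x mat set \<Rightarrow> 'y mat set \<Rightarrow> ('x \<times> 'y) mat set" where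
  "tensor_sp S N = mspan {tens A B | A B. A \<in> S \<and> B \<in> N}"

definition quantum_multi_relation ::
  "('x::finite) mat set \<Rightarrow> ('y::finite) mat set \<Rightarrow> ('x \<times> 'y) mat set \<Rightarrow> bool" where
  "quantum_multi_relation M N V \<longleftrightarrow>
     msubspace V \<and>
     V \<subseteq> tensor_sp UNIV N \<and>
     (\<forall>A\<in>commutant M. \<forall>B\<in>commutant M. \<forall>T\<in>V.
        mmul (tens A idm) (mmul T (tens B idm)) \<in> V) \<and>
     (\<forall>Z\<in>center N. \<forall>T\<in>V. mmul (tens idm Z) T \<in> V)"

definition linfty :: "('a::finite) mat set" where
  "linfty = {A. \<forall>i j. i \<noteq> j \<longrightarrow> A i j = 0}"

definition V_of_R :: "('x::finite \<times> 'x \<times> 'y::finite) set \<Rightarrow> ('x \<times> 'y) mat set" where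
  "V_of_R R = mspan {tens (munit x1 x2) (munit y y) | x1 x2 y. (x1, x2, y) \<in> R}"

definition R_of_V :: "('x::finite \<times> 'y::finite) mat set \<Rightarrow> ('x \<times> 'x \<times> 'y) set" where
  "R_of_V V = {(x1, x2, y). \<exists>T\<in>V. T (x1, y) (x2, y) \<noteq> 0}"

end

theory Submission
  imports Defs
begin

text \<open>
  The diagonal algebra l\<infinity> is its own commutant and centre, so the bimodule conditions for
  (l\<infinity>(X), l\<infinity>(Y)) only ask V to be closed under multiplying each entry T (x1,y1) (x2,y2)
  by weights depending on x1, x2 and y1, while V \<subseteq> B(l2(X)) \<otimes> l\<infinity>(Y) says that y1 = y2 on
  the support of every T \<in> V. V_R has these properties because its generators are matrix units.
  Conversely, compressing T \<in> V by the diagonal projections e_{x1x1} \<otimes> 1, e_{x2x2} \<otimes> 1 and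
  1 \<otimes> e_{yy} leaves T (x1,y) (x2,y) times e_{x1x2} \<otimes> e_{yy}, so V contains the matrix units on
  its support and hence is spanned by them.
\<close>

lemma mspan_induct [consumes 1, case_names zero add scale base]:
  assumes "T \<in> mspan S"
    and "P (\<lambda>i j. 0)"
    and "\<And>A B. P A \<Longrightarrow> P B \<Longrightarrow> P (\<lambda>i j. A i j + B i j)"
    and "\<And>c A. P A \<Longrightarrow> P (\<lambda>i j. c * A i j)"
    and "\<And>A. A \<in> S \<Longrightarrow> P A"
  shows "P T"
proof -
  obtain n c f where f: "\<forall>k<n. f k \<in> S" and T: "T = (\<lambda>i j. \<Sum>k<(n::nat). c k * f k i j)"
    using assms(1) unfolding mspan_def by blast
  have "P (\<lambda>i j. \<Sum>k<m. c k * f k i j)" if "m \<le> n" for m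
    using that
  proof (induction m)
    case 0
    then show ?case using assms(2) by simp
  next
    case (Suc m)
    then show ?case
      using assms(3)[OF Suc.IH assms(4)[OF assms(5)]] f by simp
  qed
  then show ?thesis using T by simp
qed

lemma mspan_superset: "A \<in> S \<Longrightarrow> A \<in> mspan S"
  unfolding mspan_def by (intro CollectI exI[of _ 1] exI[of _ "\<lambda>_. 1"] exI[of _ "\<lambda>_. A"]) simp

lemma mspan_add_scaled:
  assumes "A \<in> mspan S" "G \<in> S"
  shows "(\<lambda>i j. A i j + c * G i j) \<in> mspan S"
proof -
  obtain n cs f where f: "\<forall>k<n. f k \<in> S" and A: "A = (\<lambda>i j. \<Sum>k<(n::nat). cs k * f k i j)"
    using assms(1) unfolding mspan_def by blast
  have "(\<lambda>i j. A i j + c * G i j) = (\<lambda>i j. \<Sum>k<Suc n. (cs(n := c)) k * (f(n := G)) k i j)"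
    using A by (auto intro!: sum.cong)
  then show ?thesis
    unfolding mspan_def using f assms(2)
    by (intro CollectI exI[of _ "Suc n"] exI[of _ "cs(n := c)"] exI[of _ "f(n := G)"]) auto
qed

lemma msubspace_mspan: "msubspace (mspan S)"
  unfolding msubspace_def
proof (intro conjI ballI allI)
  show "(\<lambda>i j. 0) \<in> mspan S"
    unfolding mspan_def by (intro CollectI exI[of _ 0]) auto
next
  fix A B assume A: "A \<in> mspan S" and "B \<in> mspan S"
  then obtain n c f where f: "\<forall>k<n. f k \<in> S" and B: "B = (\<lambda>i j. \<Sum>k<(n::nat). c k * f k i j)"
    unfolding mspan_def by blast
  have "(\<lambda>i j. A i j + (\<Sum>k<m. c k * f k i j)) \<in> mspan S" if "m \<le> n" for m
    using that
  proof (induction m)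
    case 0
    then show ?case using A by simp
  next
    case (Suc m)
    then show ?case
      using mspan_add_scaled[OF Suc.IH, of "f m" "c m"] f by (simp add: add.assoc)
  qed
  then show "(\<lambda>i j. A i j + B i j) \<in> mspan S" using B by simp
next
  fix c :: complex and A assume "A \<in> mspan S"
  then obtain n cs f where f: "\<forall>k<n. f k \<in> S" and A: "A = (\<lambda>i j. \<Sum>k<(n::nat). cs k * f k i j)"
    unfolding mspan_def by blast
  show "(\<lambda>i j. c * A i j) \<in> mspan S"
    unfolding mspan_def A using f
    by (intro CollectI exI[of _ n] exI[of _ "\<lambda>k. c * cs k"] exI[of _ f])
      (simp add: sum_distrib_left mult.assoc)
qed

lemma msubspace_zero: "msubspace V \<Longrightarrow> (\<lambda>i j. 0) \<in> V"
  and msubspace_add: "msubspace V \<Longrightarrow> A \<in> V \<Longrightarrow> B \<in> V \<Longrightarrow> (\<lambda>i j. A i j + B i j) \<in> V"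
  and msubspace_scale: "msubspace V \<Longrightarrow> A \<in> V \<Longrightarrow> (\<lambda>i j. c * A i j) \<in> V"
  unfolding msubspace_def by blast+

lemma msubspace_sum:
  assumes "msubspace V" "finite I" "\<And>k. k \<in> I \<Longrightarrow> F k \<in> V"
  shows "(\<lambda>i j. \<Sum>k\<in>I. F k i j) \<in> V"
  using assms(2,3)
proof (induction I rule: finite_induct)
  case empty
  then show ?case using msubspace_zero[OF assms(1)] by simp
next
  case (insert k I)
  then show ?case using msubspace_add[OF assms(1)] by simp
qed

lemma mspan_minimal: "msubspace V \<Longrightarrow> S \<subseteq> V \<Longrightarrow> mspan S \<subseteq> V"
  by (auto elim!: mspan_induct intro: msubspace_zero msubspace_add msubspace_scale)

lemma munit_diag_linfty: "munit x x \<in> linfty"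
  unfolding linfty_def munit_def by auto

lemma tens_linfty: "A \<in> linfty \<Longrightarrow> B \<in> linfty \<Longrightarrow> tens A B \<in> linfty"
  unfolding linfty_def tens_def by auto

lemma idm_linfty: "idm \<in> linfty"
  unfolding linfty_def idm_def by auto

lemma mmul_linfty_left:
  assumes "D \<in> linfty"
  shows "mmul D T = (\<lambda>i j. D i i * T i j)"
proof (intro ext)
  fix i j
  have "(\<Sum>k\<in>UNIV. D i k * T k j) = (\<Sum>k\<in>UNIV. if k = i then D i i * T i j else 0)"
    using assms unfolding linfty_def by (intro sum.cong) auto
  then show "mmul D T i j = D i i * T i j"
    unfolding mmul_def by simp
qed

lemma mmul_linfty_right:
  assumes "D \<in> linfty"
  shows "mmul T D = (\<lambda>i j. T i j * D j j)"
proof (intro ext)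
  fix i j
  have "(\<Sum>k\<in>UNIV. T i k * D k j) = (\<Sum>k\<in>UNIV. if k = j then T i j * D j j else 0)"
    using assms unfolding linfty_def by (intro sum.cong) auto
  then show "mmul T D i j = T i j * D j j"
    unfolding mmul_def by simp
qed

lemma commutant_linfty: "commutant linfty = (linfty :: 'a::finite mat set)"
proof
  show "commutant linfty \<subseteq> (linfty :: 'a mat set)"
  proof
    fix A assume A: "A \<in> commutant (linfty :: 'a mat set)"
    have "A i j = 0" if "i \<noteq> j" for i j
    proof -
      have "mmul A (munit j j) = mmul (munit j j) A"
        using A munit_diag_linfty unfolding commutant_def by blast
      then have "mmul A (munit j j) i j = mmul (munit j j) A i j"
        by simp
      then show "A i j = 0"
        unfolding mmul_linfty_left[OF munit_diag_linfty] mmul_linfty_right[OF munit_diag_linfty]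
        using that by (simp add: munit_def)
    qed
    then show "A \<in> linfty"
      unfolding linfty_def by blast
  qed
  show "(linfty :: 'a mat set) \<subseteq> commutant linfty"
    unfolding commutant_def
  proof (intro subsetI CollectI ballI)
    fix A B :: "'a mat" assume A: "A \<in> linfty" and B: "B \<in> linfty"
    have "B i j = 0 \<or> i = j" for i j
      using B unfolding linfty_def by blast
    then show "mmul A B = mmul B A"
      unfolding mmul_linfty_left[OF A] mmul_linfty_right[OF A] by (metis mult.commute mult_zero_right)
  qed
qed

lemma center_linfty: "center linfty = linfty"
  unfolding center_def commutant_linfty by simp

lemma tensor_sp_linfty_block_diagonal:
  assumes "T \<in> tensor_sp UNIV linfty" and "b \<noteq> d"
  shows "T (a, b) (c, d) = 0"
proof -
  have "\<forall>a b c d. b \<noteq> d \<longrightarrow> T (a, b) (c, d) = 0"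
    using assms(1) unfolding tensor_sp_def
    by (induction rule: mspan_induct) (auto simp: tens_def linfty_def)
  then show ?thesis using assms(2) by blast
qed

lemma tens_munit_in_V_of_R: "(x1, x2, y) \<in> R \<Longrightarrow> tens (munit x1 x2) (munit y y) \<in> V_of_R R"
  unfolding V_of_R_def by (rule mspan_superset) blast

lemma msubspace_V_of_R: "msubspace (V_of_R R)"
  unfolding V_of_R_def by (rule msubspace_mspan)

lemma V_of_R_entrywise_mult:
  assumes "T \<in> V_of_R R"
  shows "(\<lambda>i j. g i j * T i j) \<in> V_of_R R"
  using assms unfolding V_of_R_def
proof (induction rule: mspan_induct)
  case zero
  then show ?case using msubspace_zero[OF msubspace_mspan] by simp
next
  case (add A B)
  then show ?case using msubspace_add[OF msubspace_mspan] by (simp add: distrib_left)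
next
  case (scale c A)
  then show ?case using msubspace_scale[OF msubspace_mspan, of _ _ c] by (simp add: mult.left_commute)
next
  case (base A)
  then obtain x1 x2 y where A: "A = tens (munit x1 x2) (munit y y)" and R: "(x1, x2, y) \<in> R"
    by blast
  have "(\<lambda>i j. g i j * A i j) = (\<lambda>i j. g (x1, y) (x2, y) * A i j)"
    unfolding A tens_def munit_def by (auto intro!: ext split: prod.splits)
  then show ?case
    using msubspace_scale[OF msubspace_V_of_R tens_munit_in_V_of_R[OF R]] A
    unfolding V_of_R_def by simp
qed

lemma V_of_R_entry_outside:
  assumes "T \<in> V_of_R R" and "(x1, x2, y) \<notin> R"
  shows "T (x1, y) (x2, y) = 0"
proof -
  have "\<forall>x1 x2 y. (x1, x2, y) \<notin> R \<longrightarrow> T (x1, y) (x2, y) = 0"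
    using assms(1) unfolding V_of_R_def
    by (induction rule: mspan_induct) (auto simp: tens_def munit_def)
  then show ?thesis using assms(2) by blast
qed

lemma quantum_multi_relation_V_of_R:
  "quantum_multi_relation linfty linfty (V_of_R (R :: ('x::finite \<times> 'x \<times> 'y::finite) set))"
  unfolding quantum_multi_relation_def commutant_linfty center_linfty
proof (intro conjI ballI)
  show "msubspace (V_of_R R)"
    by (rule msubspace_V_of_R)
  show "V_of_R R \<subseteq> tensor_sp UNIV linfty"
    unfolding V_of_R_def tensor_sp_def
    by (rule mspan_minimal[OF msubspace_mspan]) (blast intro: mspan_superset munit_diag_linfty)
next
  fix A B T assume A: "A \<in> (linfty :: 'x mat set)" and B: "B \<in> (linfty :: 'x mat set)"
    and T: "T \<in> V_of_R R"
  have "mmul (tens A idm) (mmul T (tens B idm))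
      = (\<lambda>i j. (tens A idm i i * tens B idm j j) * T i j)"
    unfolding mmul_linfty_left[OF tens_linfty[OF A idm_linfty]]
      mmul_linfty_right[OF tens_linfty[OF B idm_linfty]]
    by (simp add: mult_ac)
  then show "mmul (tens A idm) (mmul T (tens B idm)) \<in> V_of_R R"
    using V_of_R_entrywise_mult[OF T] by simp
next
  fix Z T assume Z: "Z \<in> (linfty :: 'y mat set)" and T: "T \<in> V_of_R R"
  show "mmul (tens idm Z) T \<in> V_of_R R"
    unfolding mmul_linfty_left[OF tens_linfty[OF idm_linfty Z]]
    by (rule V_of_R_entrywise_mult[OF T])
qed

lemma R_of_V_V_of_R: "R_of_V (V_of_R R) = R"
proof (intro set_eqI iffI)
  fix t assume "t \<in> R_of_V (V_of_R R)"
  then obtain x1 x2 y T where t: "t = (x1, x2, y)" and "T \<in> V_of_R R"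
    and "T (x1, y) (x2, y) \<noteq> 0"
    unfolding R_of_V_def by blast
  then show "t \<in> R"
    using V_of_R_entry_outside by blast
next
  fix t assume "t \<in> R"
  moreover obtain x1 x2 y where t: "t = (x1, x2, y)"
    by (cases t) auto
  moreover have "tens (munit x1 x2) (munit y y) (x1, y) (x2, y) \<noteq> 0"
    by (simp add: tens_def munit_def)
  ultimately show "t \<in> R_of_V (V_of_R R)"
    unfolding R_of_V_def using tens_munit_in_V_of_R by blast
qed

lemma quantum_multi_relation_linftyD:
  fixes V :: "('x::finite \<times> 'y::finite) mat set"
  assumes "quantum_multi_relation linfty linfty V"
  shows "msubspace V"
    and "V \<subseteq> tensor_sp UNIV linfty"
    and "\<And>A B T. A \<in> linfty \<Longrightarrow> B \<in> linfty \<Longrightarrow> T \<in> V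
      \<Longrightarrow> mmul (tens A idm) (mmul T (tens B idm)) \<in> V"
    and "\<And>Z T. Z \<in> linfty \<Longrightarrow> T \<in> V \<Longrightarrow> mmul (tens idm Z) T \<in> V"
  using assms unfolding quantum_multi_relation_def commutant_linfty center_linfty by simp_all

lemma quantum_multi_relation_block_diagonal:
  assumes "quantum_multi_relation linfty linfty V" and "T \<in> V" and "b \<noteq> d"
  shows "T (a, b) (c, d) = 0"
  using quantum_multi_relation_linftyD(2)[OF assms(1)] assms(2,3)
  by (blast intro: tensor_sp_linfty_block_diagonal)

lemma quantum_multi_relation_matrix_unit:
  fixes V :: "('x::finite \<times> 'y::finite) mat set"
  assumes V: "quantum_multi_relation linfty linfty V"
    and T: "T \<in> V" and nonzero: "T (x1, y) (x2, y) \<noteq> 0"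
  shows "tens (munit x1 x2) (munit y y) \<in> V"
proof -
  define C where "C = mmul (tens idm (munit y y))
    (mmul (tens (munit x1 x1) idm) (mmul T (tens (munit x2 x2) idm)))"
  have "C \<in> V"
    unfolding C_def
    by (intro quantum_multi_relation_linftyD(3,4)[OF V] munit_diag_linfty T)
  have "C = (\<lambda>i j. T (x1, y) (x2, y) * tens (munit x1 x2) (munit y y) i j)"
  proof (intro ext)
    fix i j :: "'x \<times> 'y"
    obtain a b c d where ij: "i = (a, b)" "j = (c, d)"
      by (cases i, cases j) auto
    have "C i j = munit y y b b * munit x1 x1 a a * T (a, b) (c, d) * munit x2 x2 c c"
      unfolding C_def mmul_linfty_left[OF tens_linfty[OF idm_linfty munit_diag_linfty]]
        mmul_linfty_left[OF tens_linfty[OF munit_diag_linfty idm_linfty]]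
        mmul_linfty_right[OF tens_linfty[OF munit_diag_linfty idm_linfty]]
      by (simp add: ij tens_def idm_def mult_ac)
    also have "\<dots> = T (x1, y) (x2, y) * tens (munit x1 x2) (munit y y) i j"
    proof (cases "a = x1 \<and> b = y \<and> c = x2")
      case True
      \<comment> \<open>block diagonality of T kills the entries with d \<noteq> y\<close>
      then show ?thesis
        using quantum_multi_relation_block_diagonal[OF V T, of y d x1 x2]
        by (cases "d = y") (simp_all add: ij tens_def munit_def)
    next
      case False
      then show ?thesis
        by (auto simp: ij tens_def munit_def)
    qed
    finally show "C i j = T (x1, y) (x2, y) * tens (munit x1 x2) (munit y y) i j" .
  qed
  then have "tens (munit x1 x2) (munit y y) = (\<lambda>i j. inverse (T (x1, y) (x2, y)) * C i j)"
    using nonzero by (simp add: mult.assoc [symmetric])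
  then show ?thesis
    using msubspace_scale[OF quantum_multi_relation_linftyD(1)[OF V] \<open>C \<in> V\<close>] by simp
qed

lemma quantum_multi_relation_in_V_of_R_R_of_V:
  fixes V :: "('x::finite \<times> 'y::finite) mat set"
  assumes V: "quantum_multi_relation linfty linfty V" and T: "T \<in> V"
  shows "T \<in> V_of_R (R_of_V V)"
proof -
  define unit :: "'x \<times> 'x \<times> 'y \<Rightarrow> ('x \<times> 'y) mat"
    where "unit = (\<lambda>(a, c, b). tens (munit a c) (munit b b))"
  define coeff where "coeff = (\<lambda>(a, c, b). T (a, b) (c, b))"
  have expansion: "T = (\<lambda>p q. \<Sum>t\<in>R_of_V V. coeff t * unit t p q)"
  proof (intro ext)
    fix p q :: "'x \<times> 'y"
    obtain p1 p2 q1 q2 where pq: "p = (p1, p2)" "q = (q1, q2)"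
      by (cases p, cases q) auto
    have "coeff t * unit t p q = (if t = (p1, q1, p2) then (if p2 = q2 then T p q else 0) else 0)"
      for t
      by (cases t) (auto simp: coeff_def unit_def pq tens_def munit_def)
    then have "(\<Sum>t\<in>R_of_V V. coeff t * unit t p q)
        = (if (p1, q1, p2) \<in> R_of_V V then (if p2 = q2 then T p q else 0) else 0)"
      by (simp only: sum.delta[OF finite])
    also have "\<dots> = T p q"
      using T quantum_multi_relation_block_diagonal[OF V T]
      unfolding R_of_V_def pq by auto
    finally show "T p q = (\<Sum>t\<in>R_of_V V. coeff t * unit t p q)" ..
  qed
  have "(\<lambda>p q. coeff t * unit t p q) \<in> V_of_R (R_of_V V)" if "t \<in> R_of_V V" for t
    using that msubspace_scale[OF msubspace_V_of_R tens_munit_in_V_of_R]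
    by (cases t) (simp add: unit_def)
  then have "(\<lambda>p q. \<Sum>t\<in>R_of_V V. coeff t * unit t p q) \<in> V_of_R (R_of_V V)"
    by (rule msubspace_sum[OF msubspace_V_of_R finite])
  then show ?thesis
    by (subst expansion)
qed

lemma V_of_R_R_of_V:
  assumes V: "quantum_multi_relation linfty linfty V"
  shows "V_of_R (R_of_V V) = V"
proof
  show "V_of_R (R_of_V V) \<subseteq> V"
    unfolding V_of_R_def
    by (rule mspan_minimal[OF quantum_multi_relation_linftyD(1)[OF V]])
      (auto simp: R_of_V_def intro: quantum_multi_relation_matrix_unit[OF V])
  show "V \<subseteq> V_of_R (R_of_V V)"
    using quantum_multi_relation_in_V_of_R_R_of_V[OF V] by blast
qed

theorem proposition4p2:
  fixes dummyX :: "'x::finite itself" and dummyY :: "'y::finite itself"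
  shows "(\<forall>R :: ('x \<times> 'x \<times> 'y) set.
            quantum_multi_relation (linfty :: 'x mat set) (linfty :: 'y mat set) (V_of_R R))
       \<and> bij_betw (V_of_R :: ('x \<times> 'x \<times> 'y) set \<Rightarrow> _) UNIV
           {V. quantum_multi_relation (linfty :: 'x mat set) (linfty :: 'y mat set) V}
       \<and> (\<forall>R :: ('x \<times> 'x \<times> 'y) set. R_of_V (V_of_R R) = R)
       \<and> (\<forall>V. quantum_multi_relation (linfty :: 'x mat set) (linfty :: 'y mat set) V
              \<longrightarrow> V_of_R (R_of_V V) = V)"
proof -
  have "bij_betw (V_of_R :: ('x \<times> 'x \<times> 'y) set \<Rightarrow> _) UNIV
      {V. quantum_multi_relation (linfty :: 'x mat set) (linfty :: 'y mat set) V}"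
    by (rule bij_betw_byWitness[where f' = R_of_V])
      (auto simp: R_of_V_V_of_R V_of_R_R_of_V quantum_multi_relation_V_of_R)
  then show ?thesis
    by (intro conjI allI impI quantum_multi_relation_V_of_R R_of_V_V_of_R V_of_R_R_of_V)
qed

end
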